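(* Let $p_0,p_1,p_2$ be positive integers with $\gcd(p_0,p_1,p_2)=1$, and put $n=p_0+p_1+p_2$. Let $E=(\mathbb{Z}/n\mathbb{Z})\times\{0,1,2\}$ (a set of $3n$ elements) and define permutations $\sigma_0,\sigma_1$ of $E$ by $$\sigma_0(m,0)=(m,1),\quad \sigma_0(m,1)=(m,2),\quad \sigma_0(m,2)=(m,0),$$ $$\sigma_1(m,0)=(m-p_1,2),\quad \sigma_1(m,1)=(m-p_2,0),\quad \sigma_1(m,2)=(m-p_0,1),$$ with arithmetic in the first coordinate taken modulo $n$. Let $G=\langle\sigma_0,\sigma_1\rangle$ (the monodromy group of the dessin $D(p_0,p_1,p_2)$ on the billiards surface of the triangle with angles $p_0\pi/n,p_1\pi/n,p_2\pi/n$), $N=\langle\sigma_0\sigma_1,\sigma_1\sigma_0\rangle$ and $H=\langle\sigma_0\rangle$. Then $G=N\rtimes H$ (internal semidirect product, with $N$ normal). Furthermore, if $\alpha=\gcd(n,\,p_0p_1-p_2^2)$, then $$G\cong (C_n\times C_{n/\alpha})\rtimes C_3,$$ where $C_k$ denotes the cyclic group of order $k$.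
   Context: The dessin $D(p_0,p_1,p_2)$ is the bicolored graph on the rational billiards surface of the triangle with angles $(p_0\pi/n,p_1\pi/n,p_2\pi/n)$, with a black vertex in each of the $n$ copies of the triangle having the original orientation, a white vertex in each of the $n$ reflected copies, and an edge for each pair of adjacent triangles. Edges are labeled $(m,i)$, where $m$ indexes the black vertex (the copy rotated by $2m\pi/n$) and $i$ indicates the side $s_i$ (opposite the angle $p_i\pi/n$) through which the edge passes; the monodromy permutations $\sigma_0,\sigma_1$ (counterclockwise rotation of edges around black, resp. white, vertices) act on the edges by the formulas given in the claim. Products of permutations are composed as functions, $(\sigma_0\sigma_1)(e)=\sigma_0(\sigma_1(e))$. *)

theory Defs
  imports "HOL-Algebra.Algebra"
begin

definition dessin_edges :: "nat \<Rightarrow> (int \<times> int) set" where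
  "dessin_edges n = {0..<int n} \<times> {0..<3}"

text \<open>sigma_0: rotation around black vertices (extensional, as required by BijGroup).\<close>
definition dessin_sigma0 :: "nat \<Rightarrow> (int \<times> int \<Rightarrow> int \<times> int)" where
  "dessin_sigma0 n = restrict (\<lambda>(m, i). (m, (i + 1) mod 3)) (dessin_edges n)"

definition dessin_sigma1 :: "nat \<Rightarrow> nat \<Rightarrow> nat \<Rightarrow> nat \<Rightarrow> (int \<times> int \<Rightarrow> int \<times> int)" where
  "dessin_sigma1 n p0 p1 p2 = restrict (\<lambda>(m, i).
      if i = 0 then ((m - int p1) mod int n, 2)
      else if i = 1 then ((m - int p2) mod int n, 0)
      else ((m - int p0) mod int n, 1)) (dessin_edges n)"

definition perm_subgroup :: "'a set \<Rightarrow> ('a \<Rightarrow> 'a) set \<Rightarrow> ('a \<Rightarrow> 'a) monoid" where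
  "perm_subgroup S A = (BijGroup S)\<lparr>carrier := generate (BijGroup S) A\<rparr>"

definition internal_semidirect :: "('a, 'b) monoid_scheme \<Rightarrow> 'a set \<Rightarrow> 'a set \<Rightarrow> bool" where
  "internal_semidirect G N H \<longleftrightarrow>
     N \<lhd> G \<and> subgroup H G \<and> N \<inter> H = {\<one>\<^bsub>G\<^esub>} \<and> N <#>\<^bsub>G\<^esub> H = carrier G"

definition aut_action :: "('a, 'c) monoid_scheme \<Rightarrow> ('b, 'd) monoid_scheme \<Rightarrow> ('b \<Rightarrow> 'a \<Rightarrow> 'a) \<Rightarrow> bool" where
  "aut_action A B \<phi> \<longleftrightarrow>
     (\<forall>b \<in> carrier B. \<phi> b \<in> iso A A) \<and>
     (\<forall>b \<in> carrier B. \<forall>b' \<in> carrier B. \<forall>a \<in> carrier A.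
        \<phi> (b \<otimes>\<^bsub>B\<^esub> b') a = \<phi> b (\<phi> b' a)) \<and>
     (\<forall>a \<in> carrier A. \<phi> \<one>\<^bsub>B\<^esub> a = a)"

definition semidirect_prod :: "('a, 'c) monoid_scheme \<Rightarrow> ('b, 'd) monoid_scheme \<Rightarrow> ('b \<Rightarrow> 'a \<Rightarrow> 'a) \<Rightarrow> ('a \<times> 'b) monoid" where
  "semidirect_prod A B \<phi> =
    \<lparr>carrier = carrier A \<times> carrier B,
     monoid.mult = (\<lambda>(a, b) (a', b'). (a \<otimes>\<^bsub>A\<^esub> \<phi> b a', b \<otimes>\<^bsub>B\<^esub> b')),
     one = (\<one>\<^bsub>A\<^esub>, \<one>\<^bsub>B\<^esub>)\<rparr>"

text \<open>Cyclic group of order k (k > 0).\<close>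
abbreviation cyclic_grp :: "nat \<Rightarrow> int monoid" where
  "cyclic_grp k \<equiv> integer_mod_group k"

end

theory Submission
  imports Defs
begin

text \<open>
  All permutations involved have the form \<open>(m, i) \<mapsto> (m + x i, i + k)\<close> of
  \<open>\<int>/n \<times> \<int>/3\<close>: \<open>\<sigma>\<^sub>0\<close> is the rotation \<open>k = 1\<close>, while \<open>\<sigma>\<^sub>0\<sigma>\<^sub>1\<close>
  and \<open>\<sigma>\<^sub>1\<sigma>\<^sub>0\<close> are the translations by \<open>-v\<close> and \<open>-v'\<close>, where
  \<open>v = vec1 = (p\<^sub>1, p\<^sub>2, p\<^sub>0)\<close> and \<open>v' = vec2\<close> is its cyclic shift. So \<open>N\<close> is the lattice of
  translations spanned by \<open>v, v'\<close> modulo \<open>n\<close>; it is stable under the rotation because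
  \<open>v\<close> and its two shifts add up to \<open>(n, n, n)\<close>, and \<open>G\<close> is its semidirect product with
  \<open>\<langle>\<sigma>\<^sub>0\<rangle> \<cong> C\<^sub>3\<close>.

  Since \<open>\<alpha>\<close> divides \<open>n\<close> and \<open>p\<^sub>0p\<^sub>1 - p\<^sub>2\<^sup>2\<close> and the \<open>p\<^sub>i\<close> are coprime, \<open>v' \<equiv> c v\<close>
  modulo \<open>\<alpha>\<close> for some \<open>c\<close>, so \<open>w = vec_w = v' - c v\<close> vanishes modulo \<open>\<alpha>\<close>. If
  \<open>a v + b w \<equiv> 0\<close> modulo \<open>n\<close>, two coordinates give \<open>n | b (p\<^sub>0p\<^sub>1 - p\<^sub>2\<^sup>2)\<close>, hence
  \<open>n | b \<alpha>\<close>, i.e. \<open>n/\<alpha> | b\<close>; then \<open>n | a p\<^sub>i\<close> for all \<open>i\<close>, i.e. \<open>n | a\<close>. Thus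
  \<open>(a, b) \<mapsto> a v + b w\<close> identifies \<open>N\<close> with \<open>C\<^sub>n \<times> C\<^bsub>n/\<alpha>\<^esub>\<close>.
\<close>

section \<open>Semidirect products\<close>

lemma semidirect_prod_carrier [simp]: "carrier (semidirect_prod A B \<phi>) = carrier A \<times> carrier B"
  by (simp add: semidirect_prod_def)

lemma semidirect_prod_one [simp]: "\<one>\<^bsub>semidirect_prod A B \<phi>\<^esub> = (\<one>\<^bsub>A\<^esub>, \<one>\<^bsub>B\<^esub>)"
  by (simp add: semidirect_prod_def)

lemma semidirect_prod_mult [simp]:
  "(a, b) \<otimes>\<^bsub>semidirect_prod A B \<phi>\<^esub> (a', b') = (a \<otimes>\<^bsub>A\<^esub> \<phi> b a', b \<otimes>\<^bsub>B\<^esub> b')"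
  by (simp add: semidirect_prod_def)

locale semidirect_action = A: group A + B: group B for A (structure) and B (structure) and \<phi> +
  assumes action: "aut_action A B \<phi>"
begin

lemma action_hom: "b \<in> carrier B \<Longrightarrow> \<phi> b \<in> hom A A"
  using action by (simp add: aut_action_def iso_def)

lemma action_closed: "b \<in> carrier B \<Longrightarrow> a \<in> carrier A \<Longrightarrow> \<phi> b a \<in> carrier A"
  using action_hom by (auto simp: hom_def)

lemma action_mult:
  "b \<in> carrier B \<Longrightarrow> a \<in> carrier A \<Longrightarrow> a' \<in> carrier A \<Longrightarrow> \<phi> b (a \<otimes>\<^bsub>A\<^esub> a') = \<phi> b a \<otimes>\<^bsub>A\<^esub> \<phi> b a'"
  using action_hom by (auto simp: hom_def)

lemma action_one: "b \<in> carrier B \<Longrightarrow> \<phi> b \<one>\<^bsub>A\<^esub> = \<one>\<^bsub>A\<^esub>"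
  using action_hom A.is_group by (simp add: hom_one)

lemma action_compose:
  "b \<in> carrier B \<Longrightarrow> b' \<in> carrier B \<Longrightarrow> a \<in> carrier A \<Longrightarrow> \<phi> (b \<otimes>\<^bsub>B\<^esub> b') a = \<phi> b (\<phi> b' a)"
  using action by (simp add: aut_action_def)

lemma action_unit: "a \<in> carrier A \<Longrightarrow> \<phi> \<one>\<^bsub>B\<^esub> a = a"
  using action by (simp add: aut_action_def)

lemma semidirect_prod_group: "group (semidirect_prod A B \<phi>)"
proof (rule groupI)
  let ?S = "semidirect_prod A B \<phi>"
  show "x \<otimes>\<^bsub>?S\<^esub> y \<in> carrier ?S" if "x \<in> carrier ?S" "y \<in> carrier ?S" for x y
    using that by (cases x; cases y) (auto simp: action_closed)
  show "x \<otimes>\<^bsub>?S\<^esub> y \<otimes>\<^bsub>?S\<^esub> z = x \<otimes>\<^bsub>?S\<^esub> (y \<otimes>\<^bsub>?S\<^esub> z)"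
    if "x \<in> carrier ?S" "y \<in> carrier ?S" "z \<in> carrier ?S" for x y z
    using that by (cases x; cases y; cases z)
      (auto simp: action_closed action_compose action_mult A.m_assoc B.m_assoc)
  show "\<one>\<^bsub>?S\<^esub> \<otimes>\<^bsub>?S\<^esub> x = x" if "x \<in> carrier ?S" for x
    using that by (cases x) (auto simp: action_unit)
  show "\<exists>y\<in>carrier ?S. y \<otimes>\<^bsub>?S\<^esub> x = \<one>\<^bsub>?S\<^esub>" if "x \<in> carrier ?S" for x
  proof (cases x)
    case (Pair a b)
    with that show ?thesis
      by (intro bexI[of _ "(\<phi> (inv\<^bsub>B\<^esub> b) (inv\<^bsub>A\<^esub> a), inv\<^bsub>B\<^esub> b)"])
        (auto simp: action_closed action_mult[symmetric] action_one)
  qed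
qed simp

lemma semidirect_prod_inv:
  "a \<in> carrier A \<Longrightarrow> b \<in> carrier B \<Longrightarrow>
   inv\<^bsub>semidirect_prod A B \<phi>\<^esub> (a, b) = (\<phi> (inv\<^bsub>B\<^esub> b) (inv\<^bsub>A\<^esub> a), inv\<^bsub>B\<^esub> b)"
  by (rule group.inv_equality[OF semidirect_prod_group])
    (auto simp: action_closed action_mult[symmetric] action_one)

lemma internal_semidirect_semidirect_prod:
  "internal_semidirect (semidirect_prod A B \<phi>) (carrier A \<times> {\<one>\<^bsub>B\<^esub>}) ({\<one>\<^bsub>A\<^esub>} \<times> carrier B)"
proof -
  let ?S = "semidirect_prod A B \<phi>"
  interpret S: group ?S by (rule semidirect_prod_group)
  have "subgroup (carrier A \<times> {\<one>\<^bsub>B\<^esub>}) ?S"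
    by (rule S.subgroupI) (auto simp: semidirect_prod_inv action_unit)
  then have "carrier A \<times> {\<one>\<^bsub>B\<^esub>} \<lhd> ?S"
    by (auto simp: S.normal_inv_iff semidirect_prod_inv action_closed action_unit)
  moreover have "subgroup ({\<one>\<^bsub>A\<^esub>} \<times> carrier B) ?S"
    by (rule S.subgroupI) (auto simp: semidirect_prod_inv action_one)
  moreover have "(carrier A \<times> {\<one>\<^bsub>B\<^esub>}) <#>\<^bsub>?S\<^esub> ({\<one>\<^bsub>A\<^esub>} \<times> carrier B) = carrier ?S"
  proof
    show "carrier ?S \<subseteq> (carrier A \<times> {\<one>\<^bsub>B\<^esub>}) <#>\<^bsub>?S\<^esub> ({\<one>\<^bsub>A\<^esub>} \<times> carrier B)"
    proof
      fix x assume "x \<in> carrier ?S"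
      then obtain a b where "x = (a, \<one>\<^bsub>B\<^esub>) \<otimes>\<^bsub>?S\<^esub> (\<one>\<^bsub>A\<^esub>, b)" "a \<in> carrier A" "b \<in> carrier B"
        by (auto simp: action_unit)
      then show "x \<in> (carrier A \<times> {\<one>\<^bsub>B\<^esub>}) <#>\<^bsub>?S\<^esub> ({\<one>\<^bsub>A\<^esub>} \<times> carrier B)"
        unfolding set_mult_def by blast
    qed
  qed (auto simp: set_mult_def action_closed)
  ultimately show ?thesis
    by (auto simp: internal_semidirect_def)
qed

end

lemma internal_semidirect_iso_image:
  assumes "group S" "group G" "\<Phi> \<in> iso S G" "internal_semidirect S N H"
  shows "internal_semidirect G (\<Phi> ` N) (\<Phi> ` H)"
proof -
  interpret \<Phi>: group_hom S G \<Phi>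
    using assms by (simp add: group_hom_def group_hom_axioms_def iso_def)
  have N: "N \<lhd> S" and H: "subgroup H S" and NH: "N \<inter> H = {\<one>\<^bsub>S\<^esub>}"
    and NH_carrier: "N <#>\<^bsub>S\<^esub> H = carrier S"
    using assms(4) by (auto simp: internal_semidirect_def)
  have inj: "inj_on \<Phi> (carrier S)" and surj: "\<Phi> ` carrier S = carrier G"
    using assms(3) by (auto simp: iso_def bij_betw_def)
  have sub: "N \<subseteq> carrier S" "H \<subseteq> carrier S"
    using N H by (auto dest: normal_imp_subgroup subgroup.subset)
  have "\<Phi> ` N \<inter> \<Phi> ` H = \<Phi> ` (N \<inter> H)"
    using inj_on_image_Int[OF inj sub] by simp
  then have "\<Phi> ` N \<inter> \<Phi> ` H = {\<one>\<^bsub>G\<^esub>}"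
    using NH by simp
  moreover have "\<Phi> ` N <#>\<^bsub>G\<^esub> \<Phi> ` H = carrier G"
    using set_mult_hom[OF \<Phi>.homh sub] NH_carrier surj by simp
  ultimately show ?thesis
    using iso_normal_subgroup[OF assms(3,1,2) N] \<Phi>.subgroup_img_is_subgroup[OF H]
    by (simp add: internal_semidirect_def)
qed

lemma (in group_hom) generate_eq_image:
  assumes "subgroup K G" "S \<subseteq> h ` K" "h ` K \<subseteq> generate H S"
  shows "generate H S = h ` K"
  using H.generate_subgroup_incl[OF assms(2) subgroup_img_is_subgroup[OF assms(1)]] assms(3)
  by blast

section \<open>Permutations of the edges\<close>

definition wreath_perm :: "nat \<Rightarrow> (int \<Rightarrow> int) \<Rightarrow> int \<Rightarrow> int \<times> int \<Rightarrow> int \<times> int" where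
  "wreath_perm n x k = restrict (\<lambda>(m, i). ((m + x i) mod int n, (i + k) mod 3)) (dessin_edges n)"

lemma wreath_perm_apply:
  "(m, i) \<in> dessin_edges n \<Longrightarrow> wreath_perm n x k (m, i) = ((m + x i) mod int n, (i + k) mod 3)"
  by (simp add: wreath_perm_def)

lemma wreath_perm_in_Bij:
  assumes "n > 0" shows "wreath_perm n x k \<in> Bij (dessin_edges n)"
proof -
  have maps: "wreath_perm n x k ` dessin_edges n \<subseteq> dessin_edges n"
    using assms by (auto simp: wreath_perm_def dessin_edges_def)
  have "inj_on (wreath_perm n x k) (dessin_edges n)"
  proof (rule inj_onI, clarify)
    fix m i m' i'
    assume edges: "(m, i) \<in> dessin_edges n" "(m', i') \<in> dessin_edges n"
      and "wreath_perm n x k (m, i) = wreath_perm n x k (m', i')"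
    then have i: "3 dvd i - i'" and m: "int n dvd m - m' + (x i - x i')"
      by (simp_all add: wreath_perm_apply mod_eq_dvd_iff algebra_simps)
    have "0 \<le> i" "i < 3" "0 \<le> i'" "i' < 3"
      using edges by (auto simp: dessin_edges_def)
    with i have "i = i'"
      by presburger
    with m have "m mod int n = m' mod int n"
      by (simp add: mod_eq_dvd_iff)
    with edges \<open>i = i'\<close> show "m = m' \<and> i = i'"
      by (simp add: dessin_edges_def)
  qed
  moreover have "finite (dessin_edges n)"
    by (simp add: dessin_edges_def)
  ultimately show ?thesis
    using endo_inj_surj[OF _ maps] by (simp add: Bij_def bij_betw_def wreath_perm_def)
qed

lemma wreath_perm_cong:
  assumes "\<And>i. i \<in> {0, 1, 2} \<Longrightarrow> x i mod int n = y i mod int n" and "k mod 3 = l mod 3"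
  shows "wreath_perm n x k = wreath_perm n y l"
proof
  fix z show "wreath_perm n x k z = wreath_perm n y l z"
  proof (cases "z \<in> dessin_edges n")
    case True
    then obtain m i where z: "z = (m, i)" and "i \<in> {0, 1, 2}"
      by (force simp: dessin_edges_def)
    then have "(m + x i) mod int n = (m + y i) mod int n"
      using assms(1) by (metis mod_add_right_eq)
    moreover have "(i + k) mod 3 = (i + l) mod 3"
      using assms(2) by (metis mod_add_right_eq)
    ultimately show ?thesis
      using True by (simp add: z wreath_perm_apply)
  qed (simp add: wreath_perm_def)
qed

lemma wreath_perm_mult:
  assumes "n > 0"
  shows "wreath_perm n x k \<otimes>\<^bsub>BijGroup (dessin_edges n)\<^esub> wreath_perm n y l
       = wreath_perm n (\<lambda>i. y i + x ((i + l) mod 3)) (k + l)"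
proof
  fix z
  show "(wreath_perm n x k \<otimes>\<^bsub>BijGroup (dessin_edges n)\<^esub> wreath_perm n y l) z
      = wreath_perm n (\<lambda>i. y i + x ((i + l) mod 3)) (k + l) z"
  proof (cases "z \<in> dessin_edges n")
    case True
    obtain m i where z: "z = (m, i)" by fastforce
    have "wreath_perm n y l z \<in> dessin_edges n"
      using True assms by (auto simp: z wreath_perm_apply dessin_edges_def)
    then show ?thesis
      using True wreath_perm_in_Bij[OF assms]
      by (simp add: BijGroup_def compose_def z wreath_perm_apply mod_simps ac_simps)
  next
    case False
    then show ?thesis
      using wreath_perm_in_Bij[OF assms] by (simp add: BijGroup_def compose_def wreath_perm_def)
  qed
qed

lemma wreath_perm_zero: "wreath_perm n (\<lambda>i. 0) 0 = \<one>\<^bsub>BijGroup (dessin_edges n)\<^esub>"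
proof
  fix z show "wreath_perm n (\<lambda>i. 0) 0 z = \<one>\<^bsub>BijGroup (dessin_edges n)\<^esub> z"
    by (cases "z \<in> dessin_edges n") (auto simp: BijGroup_def wreath_perm_def dessin_edges_def)
qed

lemma wreath_perm_translation_mult:
  "n > 0 \<Longrightarrow> wreath_perm n x 0 \<otimes>\<^bsub>BijGroup (dessin_edges n)\<^esub> wreath_perm n y 0 = wreath_perm n (\<lambda>i. y i + x i) 0"
  by (simp add: wreath_perm_mult) (rule wreath_perm_cong, auto)

lemma dessin_sigma0_eq: "dessin_sigma0 n = wreath_perm n (\<lambda>i. 0) 1"
  by (auto simp: dessin_sigma0_def wreath_perm_def dessin_edges_def)

section \<open>The translation lattice\<close>

lemma shift_eigenvalue_mod_exists:
  fixes p0 p1 p2 a :: int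
  assumes coprime: "gcd p0 (gcd p1 p2) = 1"
    and sum: "a dvd p0 + p1 + p2" and det: "a dvd p0 * p1 - p2\<^sup>2"
  obtains c where "a dvd p2 - c * p1" "a dvd p0 - c * p2" "a dvd p1 - c * p0"
proof -
  let ?g = "gcd (gcd p1 p2) a"
  have "?g dvd p1" "?g dvd p2" "?g dvd a"
    by (meson dvd_trans gcd_dvd1 gcd_dvd2)+
  moreover from this have "?g dvd (p0 + p1 + p2) - p1 - p2"
    using sum by (meson dvd_diff dvd_trans)
  ultimately have "?g dvd gcd p0 (gcd p1 p2)"
    by simp
  then have "?g = 1"
    using coprime by simp
  moreover obtain s t where "s * p1 + t * p2 = gcd p1 p2"
    using bezout_int by blast
  moreover obtain u r where "u * gcd p1 p2 + r * a = ?g"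
    using bezout_int by blast
  ultimately have bezout: "(u * s) * p1 + (u * t) * p2 + r * a = 1"
    by (metis distrib_left mult.assoc)
  define c where "c = (u * s) * p2 + (u * t) * p0"
  have "p2 - c * p1 = p2 * ((u * s) * p1 + (u * t) * p2 + r * a) - c * p1"
    using bezout by simp
  also have "\<dots> = - (u * t) * (p0 * p1 - p2\<^sup>2) + (p2 * r) * a"
    by (simp add: c_def algebra_simps power2_eq_square)
  finally have d2: "a dvd p2 - c * p1"
    using det by simp
  have "p0 - c * p2 = p0 * ((u * s) * p1 + (u * t) * p2 + r * a) - c * p2"
    using bezout by simp
  also have "\<dots> = (u * s) * (p0 * p1 - p2\<^sup>2) + (p0 * r) * a"
    by (simp add: c_def algebra_simps power2_eq_square)
  finally have d0: "a dvd p0 - c * p2"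
    using det by simp
  have "p1 - c * p0 = (1 - c) * (p0 + p1 + p2) - (p2 - c * p1) - (p0 - c * p2)"
    by (simp add: algebra_simps)
  then have "a dvd p1 - c * p0"
    using sum d0 d2 by simp
  with d0 d2 show thesis
    using that by blast
qed

locale dessin_lattice =
  fixes p0 p1 p2 :: int and n q :: nat and \<alpha> c :: int
  assumes pos: "p0 > 0" "p1 > 0" "p2 > 0"
    and coprime: "gcd p0 (gcd p1 p2) = 1"
    and n_eq: "int n = p0 + p1 + p2"
    and alpha_eq: "\<alpha> = gcd (int n) (p0 * p1 - p2\<^sup>2)"
    and n_eq_alpha_q: "int n = \<alpha> * int q"
    and eigenvalue: "\<alpha> dvd p2 - c * p1" "\<alpha> dvd p0 - c * p2" "\<alpha> dvd p1 - c * p0"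
begin

definition vec1 :: "int \<Rightarrow> int" where
  "vec1 j = (if j = 0 then p1 else if j = 1 then p2 else p0)"

definition vec2 :: "int \<Rightarrow> int" where
  "vec2 j = (if j = 0 then p2 else if j = 1 then p0 else p1)"

definition vec_w :: "int \<Rightarrow> int" where
  "vec_w j = vec2 j - c * vec1 j"

definition lattice_vec :: "int \<times> int \<Rightarrow> int \<Rightarrow> int" where
  "lattice_vec u j = fst u * vec1 j + snd u * vec_w j"

lemma n_pos: "n > 0"
  using pos n_eq by simp

lemma alpha_pos: "\<alpha> > 0"
  using alpha_eq n_pos by simp

lemma q_pos: "q > 0"
proof -
  have "0 < \<alpha> * int q"
    using n_eq_alpha_q n_pos by simp
  then show ?thesis
    using alpha_pos by (simp add: zero_less_mult_iff)
qed

lemma n_dvd_q_vec_w: "j \<in> {0, 1, 2} \<Longrightarrow> int n dvd int q * vec_w j"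
  using eigenvalue n_eq_alpha_q by (auto simp: vec_w_def vec1_def vec2_def mult.commute)

lemma lattice_vec_mod:
  assumes "j \<in> {0, 1, 2}"
  shows "lattice_vec (a mod int n, b mod int q) j mod int n = lattice_vec (a, b) j mod int n"
proof -
  have "int n dvd (a - a mod int n) * vec1 j"
    by (simp add: minus_mod_eq_mult_div)
  moreover have "int n dvd (b - b mod int q) * vec_w j"
    using dvd_mult[OF n_dvd_q_vec_w[OF assms], of "b div int q"]
    by (simp add: minus_mod_eq_mult_div ac_simps)
  moreover have "lattice_vec (a, b) j - lattice_vec (a mod int n, b mod int q) j
      = (a - a mod int n) * vec1 j + (b - b mod int q) * vec_w j"
    by (simp add: lattice_vec_def algebra_simps)
  ultimately have "int n dvd lattice_vec (a, b) j - lattice_vec (a mod int n, b mod int q) j"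
    by simp
  then show ?thesis
    by (simp add: mod_eq_dvd_iff dvd_diff_commute)
qed

lemma lattice_vec_add: "lattice_vec (a + a', b + b') j = lattice_vec (a, b) j + lattice_vec (a', b') j"
  by (simp add: lattice_vec_def algebra_simps)

lemma lattice_vec_alt: "lattice_vec (a, b) j = (a - b * c) * vec1 j + b * vec2 j"
  by (simp add: lattice_vec_def vec_w_def algebra_simps)

lemma lattice_vec_shift:
  "j \<in> {0, 1, 2} \<Longrightarrow> lattice_vec (a, b) ((j - 1) mod 3)
     = (a - b * c) * int n + lattice_vec (- (1 + c) * a + (1 + c + c\<^sup>2) * b, - a + c * b) j"
  by (auto simp: lattice_vec_def vec1_def vec2_def vec_w_def n_eq algebra_simps power2_eq_square)

lemma lattice_vec_kernel:
  assumes "\<And>j. j \<in> {0, 1, 2} \<Longrightarrow> int n dvd lattice_vec (a, b) j"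
  shows "int n dvd a" and "int q dvd b"
proof -
  define e where "e = b * c - a"
  have "int n dvd b * vec2 j - e * vec1 j" if "j \<in> {0, 1, 2}" for j
    using assms[OF that] by (simp add: lattice_vec_alt e_def algebra_simps)
  from this[of 0] this[of 1]
  have "int n dvd b * p2 - e * p1" "int n dvd b * p0 - e * p2"
    by (simp_all add: vec1_def vec2_def)
  moreover have "b * (p0 * p1 - p2\<^sup>2) = p1 * (b * p0 - e * p2) - p2 * (b * p2 - e * p1)"
    by (simp add: algebra_simps power2_eq_square)
  ultimately have "int n dvd gcd (b * int n) (b * (p0 * p1 - p2\<^sup>2))"
    by simp
  also have "gcd (b * int n) (b * (p0 * p1 - p2\<^sup>2)) = \<bar>b\<bar> * \<alpha>"
    by (simp add: gcd_mult_left alpha_eq abs_mult)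
  finally show "int q dvd b"
    using n_eq_alpha_q alpha_pos by (simp add: mult.commute)
  then have "int n dvd b * vec_w j" if "j \<in> {0, 1, 2}" for j
    using n_dvd_q_vec_w[OF that] by (metis dvd_trans mult_dvd_mono dvd_refl mult.commute)
  then have "int n dvd a * vec1 j" if "j \<in> {0, 1, 2}" for j
    using assms[OF that] that by (simp add: lattice_vec_def dvd_add_left_iff)
  from this[of 0] this[of 1] this[of 2]
  have "int n dvd gcd (a * p0) (gcd (a * p1) (a * p2))"
    by (simp add: vec1_def)
  also have "gcd (a * p0) (gcd (a * p1) (a * p2)) = \<bar>a\<bar>"
    by (simp add: gcd_mult_left coprime)
  finally show "int n dvd a"
    by simp
qed

abbreviation lattice_grp :: "(int \<times> int) monoid" where
  "lattice_grp \<equiv> cyclic_grp n \<times>\<times> cyclic_grp q"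

lemma carrier_cyclic_grp_n [simp]: "carrier (cyclic_grp n) = {0..<int n}"
  using n_pos by (simp add: carrier_integer_mod_group)

lemma carrier_cyclic_grp_q [simp]: "carrier (cyclic_grp q) = {0..<int q}"
  using q_pos by (simp add: carrier_integer_mod_group)

sublocale lattice: group lattice_grp
  by (simp add: DirProd_group)

lemma lattice_grp_mult: "u \<otimes>\<^bsub>lattice_grp\<^esub> u' = ((fst u + fst u') mod int n, (snd u + snd u') mod int q)"
  by (simp add: mult_DirProd')

lemma lattice_vec_mult:
  "j \<in> {0, 1, 2} \<Longrightarrow> lattice_vec (u \<otimes>\<^bsub>lattice_grp\<^esub> u') j mod int n = (lattice_vec u j + lattice_vec u' j) mod int n"
  using lattice_vec_add[of "fst u" "fst u'" "snd u" "snd u'"]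
  by (simp add: lattice_grp_mult lattice_vec_mod)

lemma lattice_vec_inj:
  assumes "u \<in> carrier lattice_grp" "u' \<in> carrier lattice_grp"
    and "\<And>j. j \<in> {0, 1, 2} \<Longrightarrow> lattice_vec u j mod int n = lattice_vec u' j mod int n"
  shows "u = u'"
proof -
  obtain a b a' b' where u: "u = (a, b)" "u' = (a', b')"
    by fastforce
  have "int n dvd lattice_vec (a - a', b - b') j" if "j \<in> {0, 1, 2}" for j
    using assms(3)[OF that] lattice_vec_add[of a' "a - a'" b' "b - b'" j]
    by (simp add: u mod_eq_dvd_iff)
  then have "int n dvd a - a'" "int q dvd b - b'"
    using lattice_vec_kernel by blast+
  then have "a mod int n = a' mod int n" "b mod int q = b' mod int q"
    by (simp_all add: mod_eq_dvd_iff)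
  with assms(1,2) show ?thesis
    by (simp add: u)
qed

text \<open>The coordinates of the cyclic shift of a lattice vector, read off from \<open>lattice_vec_shift\<close>.\<close>
definition rotate_coords :: "int \<times> int \<Rightarrow> int \<times> int" where
  "rotate_coords u = ((- (1 + c) * fst u + (1 + c + c\<^sup>2) * snd u) mod int n, (- fst u + c * snd u) mod int q)"

lemma rotate_coords_closed: "rotate_coords u \<in> carrier lattice_grp"
  using n_pos q_pos by (simp add: rotate_coords_def)

lemma lattice_vec_rotate_coords:
  "j \<in> {0, 1, 2} \<Longrightarrow> lattice_vec (rotate_coords u) j mod int n = lattice_vec u ((j - 1) mod 3) mod int n"
  using lattice_vec_shift[of j "fst u" "snd u"] by (simp add: rotate_coords_def lattice_vec_mod)

definition rotation :: "int \<Rightarrow> int \<times> int \<Rightarrow> int \<times> int" where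
  "rotation k = rotate_coords ^^ nat k"

lemma rotation_closed: "u \<in> carrier lattice_grp \<Longrightarrow> rotation k u \<in> carrier lattice_grp"
  unfolding rotation_def using rotate_coords_closed by (cases "nat k") auto

lemma lattice_vec_funpow_rotate_coords:
  "j \<in> {0, 1, 2} \<Longrightarrow>
   lattice_vec ((rotate_coords ^^ m) u) j mod int n = lattice_vec u ((j - int m) mod 3) mod int n"
proof (induction m arbitrary: j)
  case 0
  then show ?case by auto
next
  case (Suc m)
  have "(j - 1) mod 3 \<in> {0, 1, 2}"
    by auto
  then have "lattice_vec ((rotate_coords ^^ Suc m) u) j mod int n
      = lattice_vec u (((j - 1) mod 3 - int m) mod 3) mod int n"
    using Suc by (simp add: lattice_vec_rotate_coords)
  then show ?case
    by (simp add: mod_diff_left_eq algebra_simps)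
qed

lemma lattice_vec_rotation:
  "j \<in> {0, 1, 2} \<Longrightarrow> k \<ge> 0 \<Longrightarrow>
   lattice_vec (rotation k u) j mod int n = lattice_vec u ((j - k) mod 3) mod int n"
  using lattice_vec_funpow_rotate_coords[of j "nat k" u] by (simp add: rotation_def)

lemma rotation_mod_3:
  assumes "k \<ge> 0" "u \<in> carrier lattice_grp"
  shows "rotation k u = rotation (k mod 3) u"
proof (rule lattice_vec_inj)
  show "rotation k u \<in> carrier lattice_grp" "rotation (k mod 3) u \<in> carrier lattice_grp"
    using assms(2) by (simp_all only: rotation_closed)
  fix j :: int assume "j \<in> {0, 1, 2}"
  with assms(1) show "lattice_vec (rotation k u) j mod int n = lattice_vec (rotation (k mod 3) u) j mod int n"
    by (simp add: lattice_vec_rotation mod_diff_right_eq)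
qed

lemma rotation_rotation:
  assumes "k \<ge> 0" "l \<ge> 0" "u \<in> carrier lattice_grp"
  shows "rotation k (rotation l u) = rotation ((k + l) mod 3) u"
proof -
  have "rotation k (rotation l u) = rotation (k + l) u"
    using assms by (simp add: rotation_def funpow_add nat_add_distrib)
  also have "\<dots> = rotation ((k + l) mod 3) u"
    using assms by (intro rotation_mod_3) simp_all
  finally show ?thesis .
qed

lemma rotation_mult:
  assumes "k \<ge> 0" "u \<in> carrier lattice_grp" "u' \<in> carrier lattice_grp"
  shows "rotation k (u \<otimes>\<^bsub>lattice_grp\<^esub> u') = rotation k u \<otimes>\<^bsub>lattice_grp\<^esub> rotation k u'"
proof (rule lattice_vec_inj)
  fix j :: int assume j: "j \<in> {0, 1, 2}"
  define J where "J = (j - k) mod 3"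
  have J: "J \<in> {0, 1, 2}"
    by (auto simp: J_def)
  have "lattice_vec (rotation k (u \<otimes>\<^bsub>lattice_grp\<^esub> u')) j mod int n
      = lattice_vec (u \<otimes>\<^bsub>lattice_grp\<^esub> u') J mod int n"
    using j assms(1) by (simp add: lattice_vec_rotation J_def)
  also have "\<dots> = (lattice_vec u J + lattice_vec u' J) mod int n"
    by (rule lattice_vec_mult[OF J])
  also have "\<dots> = (lattice_vec (rotation k u) j + lattice_vec (rotation k u') j) mod int n"
    using j assms(1) by (intro mod_add_cong) (simp_all add: lattice_vec_rotation J_def)
  also have "\<dots> = lattice_vec (rotation k u \<otimes>\<^bsub>lattice_grp\<^esub> rotation k u') j mod int n"
    using j by (simp add: lattice_vec_mult)
  finally show "lattice_vec (rotation k (u \<otimes>\<^bsub>lattice_grp\<^esub> u')) j mod int n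
      = lattice_vec (rotation k u \<otimes>\<^bsub>lattice_grp\<^esub> rotation k u') j mod int n" .
qed (use assms in \<open>simp_all only: rotation_closed lattice.m_closed\<close>)

lemma rotation_zero [simp]: "rotation 0 u = u"
  by (simp add: rotation_def)

lemma carrier_cyclic_grp_3: "carrier (cyclic_grp 3) = {0..<3}"
  by (simp add: carrier_integer_mod_group)

lemma rotation_iso:
  assumes "k \<in> carrier (cyclic_grp 3)"
  shows "rotation k \<in> iso lattice_grp lattice_grp"
proof (rule isoI)
  have k: "0 \<le> k" "k < 3"
    using assms by (simp_all add: carrier_cyclic_grp_3)
  show "rotation k \<in> hom lattice_grp lattice_grp"
    using k by (intro homI) (simp_all only: rotation_closed rotation_mult)
  have "rotation (3 - k) (rotation k u) = u" "rotation k (rotation (3 - k) u) = u"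
    if "u \<in> carrier lattice_grp" for u
    using k that by (simp_all add: rotation_rotation)
  then show "bij_betw (rotation k) (carrier lattice_grp) (carrier lattice_grp)"
    by (intro bij_betw_byWitness[where f' = "rotation (3 - k)"]) (auto simp only: rotation_closed)
qed

lemma aut_action_rotation: "aut_action lattice_grp (cyclic_grp 3) rotation"
  unfolding aut_action_def
  by (auto simp: rotation_iso carrier_cyclic_grp_3 rotation_rotation)

sublocale semidirect_action lattice_grp "cyclic_grp 3" rotation
  by (simp add: semidirect_action_def semidirect_action_axioms_def aut_action_rotation DirProd_group)

section \<open>The monodromy group\<close>

abbreviation edge_perms :: "(int \<times> int \<Rightarrow> int \<times> int) monoid" where
  "edge_perms \<equiv> BijGroup (dessin_edges n)"

abbreviation lattice_sdp :: "((int \<times> int) \<times> int) monoid" where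
  "lattice_sdp \<equiv> semidirect_prod lattice_grp (cyclic_grp 3) rotation"

text \<open>\<open>perm_of (u, k)\<close> rotates the sides by \<open>k\<close> and then translates by \<open>lattice_vec u\<close>.\<close>
definition perm_of :: "(int \<times> int) \<times> int \<Rightarrow> int \<times> int \<Rightarrow> int \<times> int" where
  "perm_of x = wreath_perm n (\<lambda>i. lattice_vec (fst x) ((i + snd x) mod 3)) (snd x)"

lemma perm_of_closed: "perm_of x \<in> carrier edge_perms"
  using wreath_perm_in_Bij[OF n_pos] by (simp add: perm_of_def BijGroup_def)

lemma perm_of_mult:
  assumes "x \<in> carrier lattice_sdp" "y \<in> carrier lattice_sdp"
  shows "perm_of (x \<otimes>\<^bsub>lattice_sdp\<^esub> y) = perm_of x \<otimes>\<^bsub>edge_perms\<^esub> perm_of y"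
proof -
  obtain u k u' k' where xy: "x = (u, k)" "y = (u', k')"
    by fastforce
  have k: "0 \<le> k"
    using assms xy by (simp add: carrier_cyclic_grp_3)
  have "perm_of x \<otimes>\<^bsub>edge_perms\<^esub> perm_of y
      = wreath_perm n (\<lambda>i. lattice_vec u' ((i + k') mod 3) + lattice_vec u (((i + k') mod 3 + k) mod 3)) (k + k')"
    by (simp add: perm_of_def xy wreath_perm_mult[OF n_pos])
  also have "\<dots> = perm_of (x \<otimes>\<^bsub>lattice_sdp\<^esub> y)"
    unfolding perm_of_def xy semidirect_prod_mult mult_integer_mod_group of_nat_numeral fst_conv snd_conv
  proof (rule wreath_perm_cong)
    fix i :: int assume "i \<in> {0, 1, 2}"
    define J where "J = (i + k + k') mod 3"
    have J: "J \<in> {0, 1, 2}"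
      by (auto simp: J_def)
    have J_eq: "(i + (k + k') mod 3) mod 3 = J" "((i + k') mod 3 + k) mod 3 = J"
      and shift: "(J - k) mod 3 = (i + k') mod 3"
      by (simp_all add: J_def mod_simps ac_simps)
    have "lattice_vec (u \<otimes>\<^bsub>lattice_grp\<^esub> rotation k u') J mod int n
        = (lattice_vec u J + lattice_vec (rotation k u') J) mod int n"
      by (rule lattice_vec_mult[OF J])
    also have "\<dots> = (lattice_vec u J + lattice_vec u' ((i + k') mod 3)) mod int n"
      using J k by (intro mod_add_cong) (simp_all add: lattice_vec_rotation shift)
    also have "\<dots> = (lattice_vec u' ((i + k') mod 3) + lattice_vec u J) mod int n"
      by (simp only: add.commute)
    finally show "(lattice_vec u' ((i + k') mod 3) + lattice_vec u (((i + k') mod 3 + k) mod 3)) mod int n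
        = lattice_vec (u \<otimes>\<^bsub>lattice_grp\<^esub> rotation k u') ((i + (k + k') mod 3) mod 3) mod int n"
      by (simp only: J_eq)
  qed simp
  finally show ?thesis
    by (rule sym)
qed

lemma group_hom_perm_of: "group_hom lattice_sdp edge_perms perm_of"
  by (intro group_hom.intro group_hom_axioms.intro semidirect_prod_group group_BijGroup homI
      perm_of_closed perm_of_mult)

lemma perm_of_apply:
  "i \<in> {0, 1, 2} \<Longrightarrow> perm_of (u, k) (0, i) = (lattice_vec u ((i + k) mod 3) mod int n, (i + k) mod 3)"
  using n_pos by (auto simp: perm_of_def wreath_perm_apply dessin_edges_def)

lemma perm_of_inj: "inj_on perm_of (carrier lattice_sdp)"
proof -
  interpret group_hom lattice_sdp edge_perms perm_of
    by (rule group_hom_perm_of)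
  have "x = \<one>\<^bsub>lattice_sdp\<^esub>"
    if x: "x \<in> carrier lattice_sdp" and id: "perm_of x = \<one>\<^bsub>edge_perms\<^esub>" for x
  proof -
    obtain u k where uk: "x = (u, k)" "u \<in> carrier lattice_grp" "0 \<le> k" "k < 3"
      using x by (auto simp: carrier_cyclic_grp_3)
    have fix_edges: "perm_of (u, k) (0, i) = (0, i)" if "i \<in> {0, 1, 2}" for i
      using id that n_pos by (auto simp: uk BijGroup_def dessin_edges_def)
    from fix_edges[of 0] uk have "k = 0"
      by (simp add: perm_of_apply)
    have "u = (0, 0)"
    proof (rule lattice_vec_inj)
      fix j :: int assume "j \<in> {0, 1, 2}"
      with fix_edges[of j] \<open>k = 0\<close> show "lattice_vec u j mod int n = lattice_vec (0, 0) j mod int n"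
        by (auto simp: perm_of_apply lattice_vec_def)
    qed (use uk n_pos q_pos in auto)
    with uk \<open>k = 0\<close> show ?thesis
      by simp
  qed
  then have "kernel lattice_sdp edge_perms perm_of = {\<one>\<^bsub>lattice_sdp\<^esub>}"
    unfolding kernel_def using hom_one G.one_closed by blast
  then show ?thesis
    by (rule trivial_ker_imp_inj)
qed

abbreviation sigma0 :: "int \<times> int \<Rightarrow> int \<times> int" where
  "sigma0 \<equiv> dessin_sigma0 n"

abbreviation sigma1 :: "int \<times> int \<Rightarrow> int \<times> int" where
  "sigma1 \<equiv> dessin_sigma1 n (nat p0) (nat p1) (nat p2)"

lemma dessin_sigma1_eq: "sigma1 = wreath_perm n (\<lambda>i. - vec1 i) 2"
proof
  fix z show "sigma1 z = wreath_perm n (\<lambda>i. - vec1 i) 2 z"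
  proof (cases "z \<in> dessin_edges n")
    case True
    then obtain m i where "z = (m, i)" "i = 0 \<or> i = 1 \<or> i = 2"
      by (force simp: dessin_edges_def)
    with True pos show ?thesis
      by (auto simp: dessin_sigma1_def wreath_perm_apply vec1_def)
  qed (simp add: dessin_sigma1_def wreath_perm_def)
qed

lemma sigma0_eq_perm_of: "sigma0 = perm_of ((0, 0), 1)"
  by (simp add: dessin_sigma0_eq perm_of_def lattice_vec_def)

lemma sigma1_eq_perm_of: "sigma1 = perm_of (((- c) mod int n, (- 1) mod int q), 2)"
  unfolding dessin_sigma1_eq perm_of_def fst_conv snd_conv
proof (rule wreath_perm_cong)
  fix i :: int assume i: "i \<in> {0, 1, 2}"
  have "(i + 2) mod 3 \<in> {0, 1, 2}"
    by auto
  then have "lattice_vec ((- c) mod int n, (- 1) mod int q) ((i + 2) mod 3) mod int n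
      = lattice_vec (- c, - 1) ((i + 2) mod 3) mod int n"
    by (rule lattice_vec_mod)
  also have "lattice_vec (- c, - 1) ((i + 2) mod 3) = - vec1 i"
    using i by (auto simp: lattice_vec_alt vec1_def vec2_def)
  finally show "- vec1 i mod int n = lattice_vec ((- c) mod int n, (- 1) mod int q) ((i + 2) mod 3) mod int n"
    by (rule sym)
qed simp

lemma sigma0_sigma1: "sigma0 \<otimes>\<^bsub>edge_perms\<^esub> sigma1 = wreath_perm n (\<lambda>i. - vec1 i) 0"
  unfolding dessin_sigma0_eq dessin_sigma1_eq wreath_perm_mult[OF n_pos]
  by (rule wreath_perm_cong) auto

lemma sigma1_sigma0: "sigma1 \<otimes>\<^bsub>edge_perms\<^esub> sigma0 = wreath_perm n (\<lambda>i. - vec2 i) 0"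
  unfolding dessin_sigma0_eq dessin_sigma1_eq wreath_perm_mult[OF n_pos]
  by (rule wreath_perm_cong) (auto simp: vec1_def vec2_def)

abbreviation G_gen :: "(int \<times> int \<Rightarrow> int \<times> int) set" where
  "G_gen \<equiv> generate edge_perms {sigma0, sigma1}"

abbreviation N_gen :: "(int \<times> int \<Rightarrow> int \<times> int) set" where
  "N_gen \<equiv> generate edge_perms {sigma0 \<otimes>\<^bsub>edge_perms\<^esub> sigma1, sigma1 \<otimes>\<^bsub>edge_perms\<^esub> sigma0}"

abbreviation H_gen :: "(int \<times> int \<Rightarrow> int \<times> int) set" where
  "H_gen \<equiv> generate edge_perms {sigma0}"

lemma translation_in_N_gen: "wreath_perm n (\<lambda>i. - int a * vec1 i - int b * vec2 i) 0 \<in> N_gen"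
proof (induction a)
  case 0
  show ?case
  proof (induction b)
    case 0
    then show ?case
      using wreath_perm_zero generate.one by simp
  next
    case (Suc b)
    have "wreath_perm n (\<lambda>i. - int 0 * vec1 i - int (Suc b) * vec2 i) 0
        = (sigma1 \<otimes>\<^bsub>edge_perms\<^esub> sigma0) \<otimes>\<^bsub>edge_perms\<^esub> wreath_perm n (\<lambda>i. - int 0 * vec1 i - int b * vec2 i) 0"
      by (simp add: sigma1_sigma0 wreath_perm_translation_mult[OF n_pos] algebra_simps)
    then show ?case
      using generate.eng[OF generate.incl Suc] by simp
  qed
next
  case (Suc a)
  have "wreath_perm n (\<lambda>i. - int (Suc a) * vec1 i - int b * vec2 i) 0
      = (sigma0 \<otimes>\<^bsub>edge_perms\<^esub> sigma1) \<otimes>\<^bsub>edge_perms\<^esub> wreath_perm n (\<lambda>i. - int a * vec1 i - int b * vec2 i) 0"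
    by (simp add: sigma0_sigma1 wreath_perm_translation_mult[OF n_pos] algebra_simps)
  then show ?case
    using generate.eng[OF generate.incl Suc] by simp
qed

lemma perm_of_in_N_gen:
  assumes "u \<in> carrier lattice_grp"
  shows "perm_of (u, 0) \<in> N_gen"
proof -
  obtain a b where u: "u = (a, b)"
    by fastforce
  define a' where "a' = nat ((b * c - a) mod int n)"
  define b' where "b' = nat ((- b) mod int n)"
  have "(- int a') mod int n = (a - b * c) mod int n" "(- int b') mod int n = b mod int n"
    using n_pos by (simp_all add: a'_def b'_def mod_minus_eq)
  then have coeffs: "((- int a') * vec1 i + (- int b') * vec2 i) mod int n
      = ((a - b * c) * vec1 i + b * vec2 i) mod int n" for i
    by (intro mod_add_cong mod_mult_cong) simp_all
  have "perm_of (u, 0) = wreath_perm n (\<lambda>i. - int a' * vec1 i - int b' * vec2 i) 0"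
    unfolding perm_of_def fst_conv snd_conv
  proof (rule wreath_perm_cong)
    fix i :: int assume "i \<in> {0, 1, 2}"
    then have "lattice_vec u ((i + 0) mod 3) = (a - b * c) * vec1 i + b * vec2 i"
      by (auto simp: u lattice_vec_alt)
    with coeffs[of i] show "lattice_vec u ((i + 0) mod 3) mod int n = (- int a' * vec1 i - int b' * vec2 i) mod int n"
      by simp
  qed simp
  then show ?thesis
    using translation_in_N_gen by simp
qed

lemma rotation_in_H_gen: "wreath_perm n (\<lambda>i. 0) (int k) \<in> H_gen"
proof (induction k)
  case 0
  then show ?case
    using wreath_perm_zero generate.one by simp
next
  case (Suc k)
  have "wreath_perm n (\<lambda>i. 0) (int (Suc k)) = sigma0 \<otimes>\<^bsub>edge_perms\<^esub> wreath_perm n (\<lambda>i. 0) (int k)"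
    unfolding dessin_sigma0_eq wreath_perm_mult[OF n_pos] by (rule wreath_perm_cong) auto
  then show ?case
    using generate.eng[OF generate.incl Suc] by simp
qed

lemma generators_in_lattice_sdp:
  "((0, 0), 1) \<in> carrier lattice_sdp" "(((- c) mod int n, (- 1) mod int q), 2) \<in> carrier lattice_sdp"
  using n_pos q_pos by (simp_all add: carrier_cyclic_grp_3)

lemma N_gen_eq: "N_gen = perm_of ` (carrier lattice_grp \<times> {0})"
proof (rule group_hom.generate_eq_image[OF group_hom_perm_of])
  show "subgroup (carrier lattice_grp \<times> {0}) lattice_sdp"
    using internal_semidirect_semidirect_prod by (simp add: internal_semidirect_def normal_imp_subgroup)
  have "sigma0 \<otimes>\<^bsub>edge_perms\<^esub> sigma1
      = perm_of (((0, 0), 1) \<otimes>\<^bsub>lattice_sdp\<^esub> (((- c) mod int n, (- 1) mod int q), 2))"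
    "sigma1 \<otimes>\<^bsub>edge_perms\<^esub> sigma0
      = perm_of ((((- c) mod int n, (- 1) mod int q), 2) \<otimes>\<^bsub>lattice_sdp\<^esub> ((0, 0), 1))"
    by (simp_all only: sigma0_eq_perm_of sigma1_eq_perm_of perm_of_mult generators_in_lattice_sdp)
  moreover have "((0, 0), 1) \<otimes>\<^bsub>lattice_sdp\<^esub> (((- c) mod int n, (- 1) mod int q), 2) \<in> carrier lattice_grp \<times> {0}"
    "(((- c) mod int n, (- 1) mod int q), 2) \<otimes>\<^bsub>lattice_sdp\<^esub> ((0, 0), 1) \<in> carrier lattice_grp \<times> {0}"
    using n_pos q_pos by (simp_all add: lattice_grp_mult)
  ultimately show "{sigma0 \<otimes>\<^bsub>edge_perms\<^esub> sigma1, sigma1 \<otimes>\<^bsub>edge_perms\<^esub> sigma0}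
      \<subseteq> perm_of ` (carrier lattice_grp \<times> {0})"
    by auto
  show "perm_of ` (carrier lattice_grp \<times> {0}) \<subseteq> N_gen"
    using perm_of_in_N_gen by auto
qed

lemma H_gen_eq: "H_gen = perm_of ` ({(0, 0)} \<times> carrier (cyclic_grp 3))"
proof (rule group_hom.generate_eq_image[OF group_hom_perm_of])
  show "subgroup ({(0, 0)} \<times> carrier (cyclic_grp 3)) lattice_sdp"
    using internal_semidirect_semidirect_prod by (simp add: internal_semidirect_def)
  show "{sigma0} \<subseteq> perm_of ` ({(0, 0)} \<times> carrier (cyclic_grp 3))"
    by (auto simp: sigma0_eq_perm_of carrier_cyclic_grp_3)
  have "perm_of ((0, 0), k) \<in> H_gen" if "k \<in> carrier (cyclic_grp 3)" for k
    using that rotation_in_H_gen[of "nat k"] by (simp add: perm_of_def lattice_vec_def carrier_cyclic_grp_3)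
  then show "perm_of ` ({(0, 0)} \<times> carrier (cyclic_grp 3)) \<subseteq> H_gen"
    by auto
qed

lemma G_gen_eq: "G_gen = perm_of ` carrier lattice_sdp"
proof (rule group_hom.generate_eq_image[OF group_hom_perm_of])
  interpret edge_perms: group edge_perms
    by (rule group_BijGroup)
  show "subgroup (carrier lattice_sdp) lattice_sdp"
    by (rule group.subgroup_self[OF semidirect_prod_group])
  show "{sigma0, sigma1} \<subseteq> perm_of ` carrier lattice_sdp"
    using generators_in_lattice_sdp by (auto simp only: sigma0_eq_perm_of sigma1_eq_perm_of)
  have sigma: "sigma0 \<in> G_gen" "sigma1 \<in> G_gen"
    by (auto intro: generate.incl)
  have G_gen: "subgroup G_gen edge_perms"
    using perm_of_closed by (intro edge_perms.generate_is_subgroup) (simp add: sigma0_eq_perm_of sigma1_eq_perm_of)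
  have "N_gen \<subseteq> G_gen"
    using generate.eng[OF sigma] generate.eng[OF sigma(2,1)]
    by (intro edge_perms.generate_subgroup_incl[OF _ G_gen]) auto
  moreover have "H_gen \<subseteq> G_gen"
    using sigma by (intro edge_perms.generate_subgroup_incl[OF _ G_gen]) auto
  ultimately have "N_gen <#>\<^bsub>edge_perms\<^esub> H_gen \<subseteq> G_gen"
    using subgroup.m_closed[OF G_gen] by (auto simp: set_mult_def)
  moreover have "perm_of ` carrier lattice_sdp
      = perm_of ` ((carrier lattice_grp \<times> {0}) <#>\<^bsub>lattice_sdp\<^esub> ({(0, 0)} \<times> carrier (cyclic_grp 3)))"
    using internal_semidirect_semidirect_prod by (simp add: internal_semidirect_def)
  moreover have "\<dots> = N_gen <#>\<^bsub>edge_perms\<^esub> H_gen"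
    unfolding N_gen_eq H_gen_eq
    by (rule set_mult_hom[OF group_hom.homh[OF group_hom_perm_of]]) (use n_pos q_pos in auto)
  ultimately show "perm_of ` carrier lattice_sdp \<subseteq> G_gen"
    by simp
qed

lemma dessin_monodromy_structure:
  "internal_semidirect (edge_perms\<lparr>carrier := G_gen\<rparr>) N_gen H_gen \<and> edge_perms\<lparr>carrier := G_gen\<rparr> \<cong> lattice_sdp"
proof -
  have "subgroup G_gen edge_perms"
    unfolding G_gen_eq by (rule group_hom.img_is_subgroup[OF group_hom_perm_of])
  then have group: "group (edge_perms\<lparr>carrier := G_gen\<rparr>)"
    by (rule subgroup.subgroup_is_group) (rule group_BijGroup)
  have iso: "perm_of \<in> iso lattice_sdp (edge_perms\<lparr>carrier := G_gen\<rparr>)"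
  proof (rule isoI)
    show "perm_of \<in> hom lattice_sdp (edge_perms\<lparr>carrier := G_gen\<rparr>)"
      by (rule homI) (simp_all add: G_gen_eq perm_of_mult)
    show "bij_betw perm_of (carrier lattice_sdp) (carrier (edge_perms\<lparr>carrier := G_gen\<rparr>))"
      using perm_of_inj by (simp add: bij_betw_def G_gen_eq)
  qed
  show ?thesis
    using internal_semidirect_iso_image[OF semidirect_prod_group group iso internal_semidirect_semidirect_prod]
      group.iso_sym[OF semidirect_prod_group is_isoI[OF iso]]
    by (simp add: N_gen_eq H_gen_eq)
qed

end

lemma dessin_lattice_exists:
  fixes p0 p1 p2 n \<alpha> :: nat
  assumes "p0 > 0" "p1 > 0" "p2 > 0" "gcd p0 (gcd p1 p2) = 1" "n = p0 + p1 + p2"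
    and "\<alpha> = nat (gcd (int n) (int p0 * int p1 - (int p2)\<^sup>2))"
  obtains c where "dessin_lattice (int p0) (int p1) (int p2) n (n div \<alpha>) (int \<alpha>) c"
proof -
  have alpha: "int \<alpha> = gcd (int n) (int p0 * int p1 - (int p2)\<^sup>2)"
    using assms(6) by simp
  have "int \<alpha> dvd int n"
    unfolding alpha by (rule gcd_dvd1)
  then have n_eq: "int n = int \<alpha> * int (n div \<alpha>)"
    by (metis int_dvd_int_iff dvd_mult_div_cancel of_nat_mult)
  have sum: "int \<alpha> dvd int p0 + int p1 + int p2"
    using \<open>int \<alpha> dvd int n\<close> assms(5) by simp
  have det: "int \<alpha> dvd int p0 * int p1 - (int p2)\<^sup>2"
    unfolding alpha by (rule gcd_dvd2)
  have coprime: "gcd (int p0) (gcd (int p1) (int p2)) = 1"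
    using assms(4) by simp
  obtain c where "int \<alpha> dvd int p2 - c * int p1" "int \<alpha> dvd int p0 - c * int p2" "int \<alpha> dvd int p1 - c * int p0"
    using shift_eigenvalue_mod_exists[OF coprime sum det] by blast
  with assms(1-5) alpha n_eq coprime have "dessin_lattice (int p0) (int p1) (int p2) n (n div \<alpha>) (int \<alpha>) c"
    by unfold_locales simp_all
  then show thesis
    by (rule that)
qed

theorem theorem1:
  fixes p0 p1 p2 n \<alpha> :: nat
  assumes "p0 > 0" and "p1 > 0" and "p2 > 0"
    and "gcd p0 (gcd p1 p2) = 1"
    and "n = p0 + p1 + p2"
    and "\<alpha> = nat (gcd (int n) (int p0 * int p1 - (int p2)^2))"
  shows
    "let E = dessin_edges n; s0 = dessin_sigma0 n; s1 = dessin_sigma1 n p0 p1 p2;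
         G = perm_subgroup E {s0, s1};
         N = generate (BijGroup E) {s0 \<otimes>\<^bsub>BijGroup E\<^esub> s1, s1 \<otimes>\<^bsub>BijGroup E\<^esub> s0};
         H = generate (BijGroup E) {s0}
     in internal_semidirect G N H \<and>
        (\<exists>\<phi>. aut_action (cyclic_grp n \<times>\<times> cyclic_grp (n div \<alpha>)) (cyclic_grp 3) \<phi> \<and>
             G \<cong> semidirect_prod (cyclic_grp n \<times>\<times> cyclic_grp (n div \<alpha>)) (cyclic_grp 3) \<phi>)"
proof -
  obtain c where "dessin_lattice (int p0) (int p1) (int p2) n (n div \<alpha>) (int \<alpha>) c"
    using dessin_lattice_exists[OF assms] .
  then interpret dessin_lattice "int p0" "int p1" "int p2" n "n div \<alpha>" "int \<alpha>" c .
  show ?thesis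
    unfolding Let_def perm_subgroup_def
    using dessin_monodromy_structure aut_action_rotation by auto
qed

end
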